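(* For $h=2$ the universal variety equals the quasi-shuffle group component: $\mathcal V_{d,2}=\hat{\mathcal G}^{2}(\mathfrak A_d)$ for every $d\ge1$.
   Context: $\mathtt{K}$ is an algebraically closed field of characteristic zero, $\mathfrak A_d=\mathtt{K}[X_1,\dots,X_d]/\{\text{constants}\}$ with basis the non-constant monomials, graded by degree. Words in monomials form a basis of $T(\mathfrak A_d)$; $T^{h}(\mathfrak A_d)$ (resp. $T^{\le h}$) is the span of words of height (sum of degrees of letters) $=h$ (resp. $\le h$), $\pi^h$ the projection onto $T^h$, and $\langle\sum\alpha_w w,v\rangle=\alpha_v$. For $x=(x_1,\dots,x_N)\in(\mathtt{K}^d)^N$, $\langle \mathrm{DS}(x),\mathsf{e}_1\bullet\cdots\bullet\mathsf{e}_k\rangle=\sum_{1\le i_1<\cdots<i_k\le N}\mathsf{e}_1(x_{i_1})\cdots\mathsf{e}_k(x_{i_k})$, and $\mathrm{DS}^h(x)$ is its projection to $T^h(\mathfrak A_d)$. The discrete signature variety $\mathcal V_{d,h,N}$ is the Zariski closure of the image of $\mathrm{DS}^h$ on $(\mathtt{K}^d)^N$; these form an ascending chain in $N$ which stabilizes, and the universal variety $\mathcal V_{d,h}$ is their union. The quasi-shuffle product is defined by $\varepsilon$ a unit and $w\bullet i\ \overline{\sqcup\!\sqcup}\ v\bullet j=(w\ \overline{\sqcup\!\sqcup}\ v\bullet j)\bullet i+(w\bullet i\ \overline{\sqcup\!\sqcup}\ v)\bullet j+(w\ \overline{\sqcup\!\sqcup}\ v)\bullet ij$; $\hat{\mathcal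 G}^{\le h}(\mathfrak A_d)$ is the set of $\mathsf{u}\in T^{\le h}(\mathfrak A_d)$ with coefficient $1$ on $\varepsilon$ and $\langle\mathsf{u},w\ \overline{\sqcup\!\sqcup}\ u\rangle=\langle\mathsf{u},w\rangle\langle\mathsf{u},u\rangle$ whenever the heights sum to $\le h$, and $\hat{\mathcal G}^{h}(\mathfrak A_d)=\pi^h(\hat{\mathcal G}^{\le h}(\mathfrak A_d))$. The paper conjectures $\mathcal V_{d,h}=\hat{\mathcal G}^{h}(\mathfrak A_d)$ for all $h$; this corollary is the case $h=2$. *)

theory Defs
  imports "HOL-Computational_Algebra.Polynomial" "HOL-Library.Multiset"
begin

text \<open>A monomial X^alpha in d variables is its exponent vector alpha (a nat list of
length d); non-constant means total degree > 0. A word is a list of monomials.\<close>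

type_synonym letter = "nat list"
type_synonym word = "letter list"

definition letters :: "nat \<Rightarrow> letter set" where
  "letters d = {\<alpha>. length \<alpha> = d \<and> sum_list \<alpha> > 0}"

definition height :: "word \<Rightarrow> nat" where
  "height w = sum_list (map sum_list w)"

definition words_h :: "nat \<Rightarrow> nat \<Rightarrow> word set" where
  "words_h d h = {w. set w \<subseteq> letters d \<and> height w = h}"

definition Tspace :: "nat \<Rightarrow> nat \<Rightarrow> (word \<Rightarrow> 'a::zero) set" where
  "Tspace d h = {u. \<forall>w. w \<notin> words_h d h \<longrightarrow> u w = 0}"

definition Tle :: "nat \<Rightarrow> nat \<Rightarrow> (word \<Rightarrow> 'a::zero) set" where
  "Tle d h = {u. \<forall>w. \<not>(set w \<subseteq> letters d \<and> height w \<le> h) \<longrightarrow> u w = 0}"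

definition proj_h :: "nat \<Rightarrow> nat \<Rightarrow> (word \<Rightarrow> 'a::zero) \<Rightarrow> (word \<Rightarrow> 'a)" where
  "proj_h d h u = (\<lambda>w. if w \<in> words_h d h then u w else 0)"

definition eval_mono :: "letter \<Rightarrow> (nat \<Rightarrow> 'a::comm_ring_1) \<Rightarrow> 'a" where
  "eval_mono \<alpha> p = (\<Prod>i<length \<alpha>. p i ^ (\<alpha> ! i))"

definition DS_coef :: "(nat \<Rightarrow> nat \<Rightarrow> 'a::comm_ring_1) \<Rightarrow> nat \<Rightarrow> word \<Rightarrow> 'a" where
  "DS_coef x N w = (\<Sum>is\<in>{is. length is = length w \<and> sorted_wrt (<) is \<and> set is \<subseteq> {..<N}}.
        \<Prod>m<length w. eval_mono (w ! m) (x (is ! m)))"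

definition DS_h :: "nat \<Rightarrow> nat \<Rightarrow> nat \<Rightarrow> (nat \<Rightarrow> nat \<Rightarrow> 'a::comm_ring_1) \<Rightarrow> (word \<Rightarrow> 'a)" where
  "DS_h d h N x = proj_h d h (DS_coef x N)"

inductive_set polyfun :: "'w set \<Rightarrow> (('w \<Rightarrow> 'a::comm_ring_1) \<Rightarrow> 'a) set" for C where
  pconst: "(\<lambda>u. c) \<in> polyfun C"
| pvar: "w \<in> C \<Longrightarrow> (\<lambda>u. u w) \<in> polyfun C"
| padd: "p \<in> polyfun C \<Longrightarrow> q \<in> polyfun C \<Longrightarrow> (\<lambda>u. p u + q u) \<in> polyfun C"
| pmult: "p \<in> polyfun C \<Longrightarrow> q \<in> polyfun C \<Longrightarrow> (\<lambda>u. p u * q u) \<in> polyfun C"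

definition zariski_closure :: "nat \<Rightarrow> nat \<Rightarrow> (word \<Rightarrow> 'a::comm_ring_1) set \<Rightarrow> (word \<Rightarrow> 'a) set" where
  "zariski_closure d h S = {v \<in> Tspace d h. \<forall>p \<in> polyfun (words_h d h).
      (\<forall>s\<in>S. p s = 0) \<longrightarrow> p v = 0}"

definition DS_variety :: "nat \<Rightarrow> nat \<Rightarrow> nat \<Rightarrow> (word \<Rightarrow> 'a::comm_ring_1) set" where
  "DS_variety d h N = zariski_closure d h (range (DS_h d h N))"

definition universal_variety :: "nat \<Rightarrow> nat \<Rightarrow> (word \<Rightarrow> 'a::comm_ring_1) set" where
  "universal_variety d h = (\<Union>N. DS_variety d h N)"

text \<open>Quasi-shuffle, defined on reversed words (recursion on last letters);
  the product of letters i j is the monomial product (sum of exponent vectors).\<close>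
fun qsh_rev :: "word \<Rightarrow> word \<Rightarrow> word multiset" where
  "qsh_rev [] v = {#v#}"
| "qsh_rev w [] = {#w#}"
| "qsh_rev (i # w) (j # v) =
     image_mset ((#) i) (qsh_rev w (j # v))
   + image_mset ((#) j) (qsh_rev (i # w) v)
   + image_mset ((#) (map2 (+) i j)) (qsh_rev w v)"

definition qsh :: "word \<Rightarrow> word \<Rightarrow> word multiset" where
  "qsh w v = image_mset rev (qsh_rev (rev w) (rev v))"

definition pair :: "(word \<Rightarrow> 'a::comm_monoid_add) \<Rightarrow> word multiset \<Rightarrow> 'a" where
  "pair u M = sum_mset (image_mset u M)"

definition Ghat_le :: "nat \<Rightarrow> nat \<Rightarrow> (word \<Rightarrow> 'a::comm_ring_1) set" where
  "Ghat_le d h = {u \<in> Tle d h. u [] = 1 \<and>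
     (\<forall>w v. set w \<subseteq> letters d \<and> set v \<subseteq> letters d \<and> height w + height v \<le> h
        \<longrightarrow> pair u (qsh w v) = u w * u v)}"

definition Ghat :: "nat \<Rightarrow> nat \<Rightarrow> (word \<Rightarrow> 'a::comm_ring_1) set" where
  "Ghat d h = proj_h d h ` Ghat_le d h"

end

theory Submission
  imports Defs
begin

(* In height 2 everything is governed by the d x d matrix
     M(v)_ij = <v, X_i qsh X_j> = v(X_i X_j) + v(X_j X_i) + v(X_i*X_j),
   and v lies in Ghat^2 exactly when M(v) = y y^T for some y in K^d (take u = 1 + y + v).
   For a discrete signature M = (sum_k x_k)(sum_k x_k)^T, so on the Zariski closure the
   rank-one relations M_ii M_jk = M_ij M_ik hold, and over a field with square roots such a
   matrix is y y^T. Conversely every point of Ghat^2 is itself a signature: lists of points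
   summing to zero realise every matrix as sum_{k<l} x_k x_l^T (the triangle p, q, -(p+q)
   gives p q^T up to a symmetric term, which two points +-s z with s^2 = -1 cancel), and
   appending the point y sets the first level to y without changing the second. *)

fun iter_sum2 :: "('p \<Rightarrow> 'a::comm_semiring_1) \<Rightarrow> ('p \<Rightarrow> 'a) \<Rightarrow> 'p list \<Rightarrow> 'a" where
  "iter_sum2 f g [] = 0"
| "iter_sum2 f g (p # ps) = f p * (\<Sum>q\<leftarrow>ps. g q) + iter_sum2 f g ps"

lemma iter_sum2_append:
  "iter_sum2 f g (ps @ qs) = iter_sum2 f g ps + iter_sum2 f g qs + (\<Sum>p\<leftarrow>ps. f p) * (\<Sum>q\<leftarrow>qs. g q)"
  by (induction ps) (simp_all add: algebra_simps)

lemma sum_list_mult_eq_iter_sum2: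
  "(\<Sum>p\<leftarrow>ps. f p) * (\<Sum>p\<leftarrow>ps. g p) = iter_sum2 f g ps + iter_sum2 g f ps + (\<Sum>p\<leftarrow>ps. f p * g p)"
  by (induction ps) (simp_all add: algebra_simps)

lemma DS_coef_singleton: "DS_coef x N [a] = (\<Sum>p\<leftarrow>map x [0..<N]. eval_mono a p)"
proof -
  have "{is. length is = length [a] \<and> sorted_wrt (<) is \<and> set is \<subseteq> {..<N}} = (\<lambda>k. [k]) ` {..<N}"
    by (auto simp: length_Suc_conv)
  then show ?thesis
    by (simp add: DS_coef_def sum.reindex inj_on_def interv_sum_list_conv_sum_set_nat atLeast0LessThan)
qed

lemma DS_coef_pair: "DS_coef x N [a, b] = iter_sum2 (eval_mono a) (eval_mono b) (map x [0..<N])"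
proof -
  let ?I = "SIGMA l:{..<N}. {..<l}"
  have "{is. length is = length [a, b] \<and> sorted_wrt (<) is \<and> set is \<subseteq> {..<N}} = (\<lambda>(l, k). [k, l]) ` ?I"
    by (force simp: length_Suc_conv)
  moreover have "inj_on (\<lambda>(l, k). [k, l]) ?I"
    by (auto simp: inj_on_def)
  ultimately have "DS_coef x N [a, b] = (\<Sum>l<N. \<Sum>k<l. eval_mono a (x k) * eval_mono b (x l))"
    by (simp add: DS_coef_def sum.reindex sum.Sigma lessThan_Suc numeral_2_eq_2 case_prod_unfold mult.commute)
  also have "\<dots> = iter_sum2 (eval_mono a) (eval_mono b) (map x [0..<N])"
    by (induction N) (simp_all add: iter_sum2_append interv_sum_list_conv_sum_set_nat atLeast0LessThan
        sum_distrib_right)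
  finally show ?thesis .
qed

definition unit_mono :: "nat \<Rightarrow> nat \<Rightarrow> letter" where
  "unit_mono d i = (replicate d 0)[i := 1]"

lemma length_unit_mono [simp]: "length (unit_mono d i) = d"
  by (simp add: unit_mono_def)

lemma unit_mono_Suc_Suc: "unit_mono (Suc d) (Suc i) = 0 # unit_mono d i"
  by (simp add: unit_mono_def)

lemma sum_list_unit_mono: "i < d \<Longrightarrow> sum_list (unit_mono d i) = 1"
  by (simp add: unit_mono_def sum_list_update)

lemma eval_mono_unit_mono:
  assumes "i < d"
  shows "eval_mono (unit_mono d i) = (\<lambda>p. p i)"
proof
  fix p :: "nat \<Rightarrow> 'a"
  have "eval_mono (unit_mono d i) p = (\<Prod>k<d. if k = i then p k else 1)"
    unfolding eval_mono_def by (intro prod.cong) (auto simp: unit_mono_def nth_list_update)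
  with assms show "eval_mono (unit_mono d i) p = p i" by simp
qed

lemma eval_mono_map2_add:
  "length a = length b \<Longrightarrow> eval_mono (map2 (+) a b) p = eval_mono a p * eval_mono b p"
  by (simp add: eval_mono_def power_add prod.distrib)

lemma sum_list_map2_add:
  "length a = length b \<Longrightarrow> sum_list (map2 (+) a b) = sum_list a + sum_list (b :: nat list)"
  by (induction a b rule: list_induct2) auto

lemma map2_add_replicate_0 [simp]: "length m = n \<Longrightarrow> map2 (+) (replicate n 0) m = (m :: nat list)"
  by (simp add: list_eq_iff_nth_eq)

lemma exponent_split_unit:
  assumes "sum_list m = Suc n"
  shows "\<exists>i<length m. \<exists>a. length a = length m \<and> sum_list a = n
           \<and> m = map2 (+) (unit_mono (length m) i) a"
  using assms
proof (induction m)
  case Nil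
  then show ?case by simp
next
  case (Cons k m)
  show ?case
  proof (cases k)
    case 0
    with Cons obtain i a where "i < length m" "length a = length m" "sum_list a = n"
      and "m = map2 (+) (unit_mono (length m) i) a"
      by auto
    with 0 show ?thesis
      by (intro exI[of _ "Suc i"] conjI exI[of _ "0 # a"]) (simp_all add: unit_mono_Suc_Suc)
  next
    case (Suc k')
    then have "k # m = map2 (+) (unit_mono (Suc (length m)) 0) (k' # m)"
      by (simp add: unit_mono_def)
    with Cons.prems Suc show ?thesis
      by (intro exI[of _ 0] conjI exI[of _ "k' # m"]) simp_all
  qed
qed

lemma exponent_degree_one:
  assumes "sum_list m = 1"
  shows "\<exists>i<length m. m = unit_mono (length m) i"
proof -
  obtain i a where i: "i < length m" and a: "length a = length m" "sum_list a = 0"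
    and m: "m = map2 (+) (unit_mono (length m) i) a"
    using exponent_split_unit[of m 0] assms by auto
  have "a = replicate (length m) 0"
    using a by (auto intro: replicate_eqI simp: sum_list_eq_0_iff)
  then have "m = unit_mono (length m) i"
    by (subst m) (simp add: list_eq_iff_nth_eq)
  with i show ?thesis by blast
qed

lemma exponent_degree_two:
  assumes "sum_list m = 2"
  shows "\<exists>i<length m. \<exists>j<length m. m = map2 (+) (unit_mono (length m) i) (unit_mono (length m) j)"
proof -
  obtain i a where "i < length m" "length a = length m" "sum_list a = 1"
    and "m = map2 (+) (unit_mono (length m) i) a"
    using exponent_split_unit[of m 1] assms by auto
  with exponent_degree_one[of a] show ?thesis by metis
qed

lemma length_le_height: "set w \<subseteq> letters d \<Longrightarrow> length w \<le> height w"
proof (induction w)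
  case Nil
  then show ?case by (simp add: height_def)
next
  case (Cons a w)
  then have "sum_list a \<ge> 1" by (auto simp: letters_def)
  with Cons show ?case by (simp add: height_def)
qed

lemma unit_mono_in_letters: "i < d \<Longrightarrow> unit_mono d i \<in> letters d"
  by (simp add: letters_def sum_list_unit_mono)

lemma letter_degree_one: "a \<in> letters d \<Longrightarrow> sum_list a = 1 \<Longrightarrow> \<exists>i<d. a = unit_mono d i"
  using exponent_degree_one[of a] by (auto simp: letters_def)

lemma words_h_1: "w \<in> words_h d 1 \<longleftrightarrow> (\<exists>i<d. w = [unit_mono d i])"
proof
  assume w: "w \<in> words_h d 1"
  then have "length w \<le> 1" "w \<noteq> []"
    using length_le_height[of w d] by (auto simp: words_h_def height_def)
  then obtain a where "w = [a]" by (cases w) auto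
  with w show "\<exists>i<d. w = [unit_mono d i]"
    using letter_degree_one[of a d] by (auto simp: words_h_def height_def)
qed (auto simp: words_h_def height_def unit_mono_in_letters sum_list_unit_mono)

lemma units_word_in_words_h_2: "i < d \<Longrightarrow> j < d \<Longrightarrow> [unit_mono d i, unit_mono d j] \<in> words_h d 2"
  by (simp add: words_h_def height_def unit_mono_in_letters sum_list_unit_mono)

lemma units_product_in_words_h_2:
  "i < d \<Longrightarrow> j < d \<Longrightarrow> [map2 (+) (unit_mono d i) (unit_mono d j)] \<in> words_h d 2"
  by (simp add: words_h_def height_def letters_def sum_list_map2_add sum_list_unit_mono)

lemma words_h_2_cases:
  assumes "w \<in> words_h d 2"
  obtains i j where "i < d" "j < d" "w = [unit_mono d i, unit_mono d j]"
    | i j where "i < d" "j < d" "w = [map2 (+) (unit_mono d i) (unit_mono d j)]"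
proof -
  have letters: "set w \<subseteq> letters d" and h: "height w = 2"
    using assms by (auto simp: words_h_def)
  then have "length w \<le> 2" using length_le_height by fastforce
  then consider (nil) "w = []" | (single) m where "w = [m]" | (two) a b where "w = [a, b]"
    by (cases w rule: remdups_adj.cases) auto
  then show ?thesis
  proof cases
    case nil
    with h show ?thesis by (simp add: height_def)
  next
    case single
    with letters h exponent_degree_two[of m] show ?thesis
      by (auto simp: height_def letters_def intro: that(2))
  next
    case two
    with letters h have "sum_list a = 1" "sum_list b = 1"
      by (auto simp: letters_def height_def)
    with two letters letter_degree_one[of a d] letter_degree_one[of b d] show ?thesis
      by (auto intro: that(1))
  qed
qed

lemma qsh_Nil_left: "qsh [] v = {#v#}"
  by (simp add: qsh_def)

lemma qsh_Nil_right: "qsh w [] = {#w#}"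
  by (cases "rev w") (simp_all add: qsh_def)

lemma pair_qsh_singletons: "pair u (qsh [a] [b]) = u [a, b] + u [b, a] + u [map2 (+) a b]"
  by (simp add: qsh_def pair_def add_ac)

definition qsh_matrix :: "nat \<Rightarrow> (word \<Rightarrow> 'a::comm_ring_1) \<Rightarrow> nat \<Rightarrow> nat \<Rightarrow> 'a" where
  "qsh_matrix d v i j = pair v (qsh [unit_mono d i] [unit_mono d j])"

lemma qsh_matrix_proj_h:
  "i < d \<Longrightarrow> j < d \<Longrightarrow> qsh_matrix d (proj_h d 2 u) i j = qsh_matrix d u i j"
  by (simp add: qsh_matrix_def pair_qsh_singletons proj_h_def
      units_word_in_words_h_2 units_product_in_words_h_2)

lemma Ghat_subset_Tspace: "Ghat d h \<subseteq> Tspace d h"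
  by (auto simp: Ghat_def Tspace_def proj_h_def)

lemma Ghat_2_qsh_matrix_factors:
  assumes "v \<in> Ghat d 2"
  obtains y where "\<And>i j. i < d \<Longrightarrow> j < d \<Longrightarrow> qsh_matrix d v i j = y i * y j"
proof -
  obtain u where u: "u \<in> Ghat_le d 2" and v: "v = proj_h d 2 u"
    using assms by (auto simp: Ghat_def)
  have rel: "pair u (qsh w w') = u w * u w'"
    if "set w \<subseteq> letters d" "set w' \<subseteq> letters d" "height w + height w' \<le> 2" for w w'
    using u that unfolding Ghat_le_def by blast
  have "qsh_matrix d v i j = u [unit_mono d i] * u [unit_mono d j]" if "i < d" "j < d" for i j
  proof -
    have "qsh_matrix d v i j = qsh_matrix d u i j"
      unfolding v using that by (rule qsh_matrix_proj_h)
    also have "\<dots> = u [unit_mono d i] * u [unit_mono d j]"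
      unfolding qsh_matrix_def using that
      by (intro rel) (simp_all add: height_def unit_mono_in_letters sum_list_unit_mono)
    finally show ?thesis .
  qed
  then show ?thesis
    by (rule that)
qed

(* The witness u = 1 + y + v of T^{<=2}: on a height-one word [X_i] it evaluates the
   degree-one monomial X_i at the point y, giving y_i. *)
definition lift_to_Tle_2 :: "nat \<Rightarrow> (nat \<Rightarrow> 'a::comm_ring_1) \<Rightarrow> (word \<Rightarrow> 'a) \<Rightarrow> word \<Rightarrow> 'a" where
  "lift_to_Tle_2 d y v w = (if w \<in> words_h d 2 then v w else if w = [] then 1
      else if w \<in> words_h d 1 then eval_mono (hd w) y else 0)"

lemma proj_h_lift_to_Tle_2: "v \<in> Tspace d 2 \<Longrightarrow> proj_h d 2 (lift_to_Tle_2 d y v) = v"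
  by (rule ext) (simp add: proj_h_def lift_to_Tle_2_def Tspace_def)

lemma lift_to_Tle_2_Nil: "lift_to_Tle_2 d y v [] = 1"
  by (simp add: lift_to_Tle_2_def words_h_def height_def)

lemma lift_to_Tle_2_unit:
  assumes "i < d"
  shows "lift_to_Tle_2 d y v [unit_mono d i] = y i"
proof -
  have "[unit_mono d i] \<notin> words_h d 2" "[unit_mono d i] \<in> words_h d 1"
    using assms words_h_1[of "[unit_mono d i]" d] by (auto simp: words_h_def height_def sum_list_unit_mono)
  with assms show ?thesis
    by (simp add: lift_to_Tle_2_def eval_mono_unit_mono)
qed

lemma lift_to_Tle_2_in_Tle: "lift_to_Tle_2 d y v \<in> Tle d 2"
proof -
  have "lift_to_Tle_2 d y v w = 0" if "\<not> (set w \<subseteq> letters d \<and> height w \<le> 2)" for w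
  proof -
    have "w \<notin> words_h d 2" "w \<noteq> []" "w \<notin> words_h d 1"
      using that by (auto simp: words_h_def height_def)
    then show ?thesis by (simp add: lift_to_Tle_2_def)
  qed
  then show ?thesis by (simp add: Tle_def)
qed

lemma lift_to_Tle_2_in_Ghat_le:
  assumes v: "v \<in> Tspace d 2"
    and y: "\<And>i j. i < d \<Longrightarrow> j < d \<Longrightarrow> qsh_matrix d v i j = y i * y j"
  shows "lift_to_Tle_2 d y v \<in> Ghat_le d 2"
  unfolding Ghat_le_def
proof (intro CollectI conjI allI impI lift_to_Tle_2_in_Tle lift_to_Tle_2_Nil)
  let ?u = "lift_to_Tle_2 d y v"
  fix w w' :: word
  assume ww': "set w \<subseteq> letters d \<and> set w' \<subseteq> letters d \<and> height w + height w' \<le> 2"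
  show "pair ?u (qsh w w') = ?u w * ?u w'"
  proof (cases "w = [] \<or> w' = []")
    case True
    then show ?thesis
      by (elim disjE) (simp_all add: qsh_Nil_left qsh_Nil_right pair_def lift_to_Tle_2_Nil)
  next
    case False
    then have "length w \<ge> 1" "length w' \<ge> 1"
      by (auto simp: Suc_le_eq)
    then have "height w \<ge> 1" "height w' \<ge> 1"
      using ww' length_le_height[of w d] length_le_height[of w' d] by linarith+
    with ww' have "w \<in> words_h d 1" "w' \<in> words_h d 1"
      by (auto simp: words_h_def)
    then obtain i j where ij: "i < d" "j < d" "w = [unit_mono d i]" "w' = [unit_mono d j]"
      by (metis words_h_1)
    have "pair ?u (qsh w w') = qsh_matrix d ?u i j"
      by (simp add: ij qsh_matrix_def)
    also have "\<dots> = qsh_matrix d v i j"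
      using ij qsh_matrix_proj_h[of i d j ?u] by (simp add: proj_h_lift_to_Tle_2 v)
    finally show ?thesis
      by (simp add: ij y lift_to_Tle_2_unit)
  qed
qed

lemma Ghat_2I:
  assumes "v \<in> Tspace d 2"
    and "\<And>i j. i < d \<Longrightarrow> j < d \<Longrightarrow> qsh_matrix d v i j = y i * y j"
  shows "v \<in> Ghat d 2"
  using lift_to_Tle_2_in_Ghat_le[OF assms] proj_h_lift_to_Tle_2[OF assms(1)]
  unfolding Ghat_def by (metis image_eqI)

lemma rank_one_factorization:
  fixes M :: "'b \<Rightarrow> 'b \<Rightarrow> 'a::field"
  assumes sqrt: "\<forall>c::'a. \<exists>s. s * s = c"
    and minors: "\<And>a b c. a \<in> I \<Longrightarrow> b \<in> I \<Longrightarrow> c \<in> I \<Longrightarrow> M a a * M b c = M a b * M a c"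
  shows "\<exists>y. \<forall>a\<in>I. \<forall>b\<in>I. M a b = y a * y b"
proof (cases "\<forall>a\<in>I. M a a = 0")
  case True
  have "M a b = 0" if "a \<in> I" "b \<in> I" for a b
    using minors[of a b b] True that by simp
  then show ?thesis
    by (intro exI[of _ "\<lambda>_. 0"]) simp
next
  case False
  then obtain a0 where a0: "a0 \<in> I" "M a0 a0 \<noteq> 0" by blast
  obtain s where s: "s * s = M a0 a0" using sqrt by blast
  with a0 have "s \<noteq> 0" by auto
  have "M a b = M a0 a / s * (M a0 b / s)" if "a \<in> I" "b \<in> I" for a b
  proof -
    have "M a0 a / s * (M a0 b / s) = M a0 a * M a0 b / (s * s)"
      by simp
    also have "\<dots> = M a0 a0 * M a b / M a0 a0"
      using minors[OF a0(1) that] by (simp add: s)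
    also have "\<dots> = M a b"
      using a0(2) by simp
    finally show ?thesis ..
  qed
  then show ?thesis
    by (intro exI[of _ "\<lambda>a. M a0 a / s"]) simp
qed

lemma polyfun_diff: "p \<in> polyfun C \<Longrightarrow> q \<in> polyfun C \<Longrightarrow> (\<lambda>u. p u - q u) \<in> polyfun C"
  using polyfun.padd[OF _ polyfun.pmult[OF polyfun.pconst[of "-1"]], of p C q] by simp

lemma zariski_closure_vanishing:
  "v \<in> zariski_closure d h S \<Longrightarrow> p \<in> polyfun (words_h d h) \<Longrightarrow> (\<And>s. s \<in> S \<Longrightarrow> p s = 0) \<Longrightarrow> p v = 0"
  by (auto simp: zariski_closure_def)

lemma qsh_matrix_polyfun: "i < d \<Longrightarrow> j < d \<Longrightarrow> (\<lambda>u. qsh_matrix d u i j) \<in> polyfun (words_h d 2)"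
  unfolding qsh_matrix_def pair_qsh_singletons
  by (intro polyfun.padd polyfun.pvar units_word_in_words_h_2 units_product_in_words_h_2)

lemma qsh_matrix_DS_h:
  assumes "i < d" "j < d"
  shows "qsh_matrix d (DS_h d 2 N x) i j = (\<Sum>p\<leftarrow>map x [0..<N]. p i) * (\<Sum>p\<leftarrow>map x [0..<N]. p j)"
  using assms unfolding sum_list_mult_eq_iter_sum2
  by (simp add: qsh_matrix_def pair_qsh_singletons DS_h_def proj_h_def units_word_in_words_h_2
      units_product_in_words_h_2 DS_coef_pair DS_coef_singleton eval_mono_map2_add eval_mono_unit_mono
      add_ac)

lemma DS_variety_2_subset_Ghat:
  assumes sqrt: "\<forall>c::'a::field. \<exists>s. s * s = c"
  shows "(DS_variety d 2 N :: (word \<Rightarrow> 'a) set) \<subseteq> Ghat d 2"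
proof
  fix v :: "word \<Rightarrow> 'a"
  assume v: "v \<in> DS_variety d 2 N"
  have "qsh_matrix d v i i * qsh_matrix d v j k = qsh_matrix d v i j * qsh_matrix d v i k"
    if "i < d" "j < d" "k < d" for i j k
  proof -
    let ?minor = "\<lambda>u :: word \<Rightarrow> 'a.
      qsh_matrix d u i i * qsh_matrix d u j k - qsh_matrix d u i j * qsh_matrix d u i k"
    have "?minor v = 0"
    proof (rule zariski_closure_vanishing[where p = ?minor])
      show "v \<in> zariski_closure d 2 (range (DS_h d 2 N))"
        using v by (simp add: DS_variety_def)
      show "?minor \<in> polyfun (words_h d 2)"
        using that by (intro polyfun_diff polyfun.pmult qsh_matrix_polyfun)
      show "?minor s = 0" if "s \<in> range (DS_h d 2 N)" for s
        using that \<open>i < d\<close> \<open>j < d\<close> \<open>k < d\<close> by (auto simp: qsh_matrix_DS_h)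
    qed
    then show ?thesis by simp
  qed
  then obtain y where "\<forall>i\<in>{..<d}. \<forall>j\<in>{..<d}. qsh_matrix d v i j = y i * y j"
    using rank_one_factorization[OF sqrt, of "{..<d}" "qsh_matrix d v"] by auto
  moreover have "v \<in> Tspace d 2"
    using v by (simp add: DS_variety_def zariski_closure_def)
  ultimately show "v \<in> Ghat d 2"
    by (intro Ghat_2I) auto
qed

definition zero_sum_iter_sums :: "(nat \<Rightarrow> nat \<Rightarrow> 'a::comm_ring_1) set" where
  "zero_sum_iter_sums = {B. \<exists>ps. (\<forall>i. (\<Sum>p\<leftarrow>ps. p i) = 0) \<and> (\<forall>i j. iter_sum2 (\<lambda>p. p i) (\<lambda>p. p j) ps = B i j)}"

lemma zero_sum_iter_sums_zero: "(\<lambda>i j. 0) \<in> zero_sum_iter_sums"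
  unfolding zero_sum_iter_sums_def by (intro CollectI exI[of _ "[]"]) simp

lemma zero_sum_iter_sums_add:
  assumes "B \<in> zero_sum_iter_sums" "C \<in> zero_sum_iter_sums"
  shows "(\<lambda>i j. B i j + C i j) \<in> zero_sum_iter_sums"
proof -
  obtain ps qs where "\<forall>i. (\<Sum>p\<leftarrow>ps. p i) = 0" "\<forall>i j. iter_sum2 (\<lambda>p. p i) (\<lambda>p. p j) ps = B i j"
    "\<forall>i. (\<Sum>q\<leftarrow>qs. q i) = 0" "\<forall>i j. iter_sum2 (\<lambda>q. q i) (\<lambda>q. q j) qs = C i j"
    using assms unfolding zero_sum_iter_sums_def by blast
  then show ?thesis
    unfolding zero_sum_iter_sums_def by (intro CollectI exI[of _ "ps @ qs"]) (simp add: iter_sum2_append)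
qed

lemma zero_sum_iter_sums_sum:
  "finite S \<Longrightarrow> (\<And>s. s \<in> S \<Longrightarrow> F s \<in> zero_sum_iter_sums) \<Longrightarrow> (\<lambda>i j. \<Sum>s\<in>S. F s i j) \<in> zero_sum_iter_sums"
  by (induction S rule: finite_induct) (simp_all add: zero_sum_iter_sums_zero zero_sum_iter_sums_add)

lemma zero_sum_iter_sums_triangle:
  "(\<lambda>i j. p i * q j - (p i + q i) * (p j + q j)) \<in> zero_sum_iter_sums"
  unfolding zero_sum_iter_sums_def
  by (intro CollectI exI[of _ "[p, q, \<lambda>i. - (p i + q i)]"]) (simp add: algebra_simps)

lemma zero_sum_iter_sums_square:
  assumes "s * s = - c"
  shows "(\<lambda>i j. c * (z i * z j)) \<in> zero_sum_iter_sums"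
proof -
  have "- (s * z i * (s * z j)) = - (s * s) * (z i * z j)" for i j
    by (simp add: mult_ac)
  then have "- (s * z i * (s * z j)) = c * (z i * z j)" for i j
    by (simp add: assms)
  then show ?thesis
    unfolding zero_sum_iter_sums_def
    by (intro CollectI exI[of _ "[\<lambda>i. s * z i, \<lambda>i. - (s * z i)]"]) simp
qed

lemma zero_sum_iter_sums_outer:
  fixes p q :: "nat \<Rightarrow> 'a::comm_ring_1"
  assumes sqrt: "\<forall>c::'a. \<exists>s. s * s = c"
  shows "(\<lambda>i j. p i * q j) \<in> zero_sum_iter_sums"
proof -
  obtain s :: 'a where "s * s = - 1" using sqrt by blast
  then have "(\<lambda>i j. p i * q j - (p i + q i) * (p j + q j) + 1 * ((p i + q i) * (p j + q j)))
      \<in> zero_sum_iter_sums"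
    by (intro zero_sum_iter_sums_add zero_sum_iter_sums_triangle zero_sum_iter_sums_square)
  then show ?thesis by simp
qed

lemma exists_points_iter_sums:
  fixes y :: "nat \<Rightarrow> 'a::comm_ring_1" and A :: "nat \<Rightarrow> nat \<Rightarrow> 'a"
  assumes sqrt: "\<forall>c::'a. \<exists>s. s * s = c"
  shows "\<exists>ps. (\<forall>i. (\<Sum>p\<leftarrow>ps. p i) = y i) \<and> (\<forall>i<d. \<forall>j. iter_sum2 (\<lambda>p. p i) (\<lambda>p. p j) ps = A i j)"
proof -
  have "(\<lambda>i j. \<Sum>a<d. of_bool (i = a) * A a j) \<in> zero_sum_iter_sums"
    by (intro zero_sum_iter_sums_sum zero_sum_iter_sums_outer[OF sqrt]) simp
  then obtain ps where ps: "\<forall>i. (\<Sum>p\<leftarrow>ps. p i) = 0"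
    "\<forall>i j. iter_sum2 (\<lambda>p. p i) (\<lambda>p. p j) ps = (\<Sum>a<d. of_bool (i = a) * A a j)"
    unfolding zero_sum_iter_sums_def by blast
  have delta: "(\<Sum>a<d. of_bool (i = a) * A a j) = A i j" if "i < d" for i j
  proof -
    have "{..<d} \<inter> {a. i = a} = {i}"
      using that by auto
    then show ?thesis by simp
  qed
  \<comment> \<open>Appending \<open>y\<close> to a zero-sum list leaves its second-level sums unchanged.\<close>
  from ps show ?thesis
    by (intro exI[of _ "ps @ [y]"]) (simp add: iter_sum2_append delta)
qed

lemma Ghat_2_in_DS_image:
  fixes v :: "word \<Rightarrow> 'a::comm_ring_1"
  assumes sqrt: "\<forall>c::'a. \<exists>s. s * s = c"
    and "v \<in> Ghat d 2"
  shows "\<exists>N x. DS_h d 2 N x = v"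
proof -
  have v: "v \<in> Tspace d 2"
    using assms(2) Ghat_subset_Tspace by blast
  obtain y where y: "\<And>i j. i < d \<Longrightarrow> j < d \<Longrightarrow> qsh_matrix d v i j = y i * y j"
    using Ghat_2_qsh_matrix_factors[OF assms(2)] by blast
  obtain ps where ps_sum: "\<And>i. (\<Sum>p\<leftarrow>ps. p i) = y i"
    and ps_iter: "\<And>i j. i < d \<Longrightarrow> iter_sum2 (\<lambda>p. p i) (\<lambda>p. p j) ps = v [unit_mono d i, unit_mono d j]"
    using exists_points_iter_sums[OF sqrt, of y d "\<lambda>i j. v [unit_mono d i, unit_mono d j]"] by blast
  have coef: "DS_coef ((!) ps) (length ps) w = v w" if "w \<in> words_h d 2" for w
    using that
  proof (cases rule: words_h_2_cases)
    case (1 i j)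
    then show ?thesis
      by (simp add: map_nth DS_coef_pair eval_mono_unit_mono ps_iter)
  next
    case (2 i j)
    then have "DS_coef ((!) ps) (length ps) w = (\<Sum>p\<leftarrow>ps. p i * p j)"
      by (simp add: map_nth DS_coef_singleton eval_mono_map2_add eval_mono_unit_mono)
    also have "\<dots> = y i * y j - v [unit_mono d i, unit_mono d j] - v [unit_mono d j, unit_mono d i]"
      using sum_list_mult_eq_iter_sum2[of "\<lambda>p. p i" ps "\<lambda>p. p j"] 2 by (simp add: ps_sum ps_iter)
    also have "\<dots> = v w"
      using y[of i j, symmetric] 2 by (simp add: qsh_matrix_def pair_qsh_singletons)
    finally show ?thesis .
  qed
  have "DS_h d 2 (length ps) ((!) ps) = v"
  proof
    fix w
    show "DS_h d 2 (length ps) ((!) ps) w = v w"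
      using v coef by (simp add: DS_h_def proj_h_def Tspace_def)
  qed
  then show ?thesis by blast
qed

lemma DS_h_in_DS_variety: "DS_h d h N x \<in> DS_variety d h N"
  by (auto simp: DS_variety_def zariski_closure_def DS_h_def Tspace_def proj_h_def)

lemma sqrt_exists_if_alg_closed:
  assumes "\<forall>p :: 'a::comm_ring_1 poly. degree p > 0 \<longrightarrow> (\<exists>z. poly p z = 0)"
  shows "\<forall>c::'a. \<exists>s. s * s = c"
proof
  fix c :: 'a
  obtain s where "poly [:-c, 0, 1:] s = 0"
    using assms[rule_format, of "[:-c, 0, 1:]"] by auto
  then show "\<exists>s. s * s = c" by (auto simp: algebra_simps)
qed

theorem corollary5p7:
  fixes d :: nat
  assumes alg_closed: "\<forall>p :: 'a :: field_char_0 poly. degree p > 0 \<longrightarrow> (\<exists>z. poly p z = 0)"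
    and d_pos: "d \<ge> 1"
  shows "(universal_variety d 2 :: (word \<Rightarrow> 'a) set) = Ghat d 2"
proof -
  have sqrt: "\<forall>c::'a. \<exists>s. s * s = c"
    using alg_closed by (rule sqrt_exists_if_alg_closed)
  show ?thesis
  proof
    show "(universal_variety d 2 :: (word \<Rightarrow> 'a) set) \<subseteq> Ghat d 2"
      unfolding universal_variety_def using DS_variety_2_subset_Ghat[OF sqrt] by blast
    show "Ghat d 2 \<subseteq> (universal_variety d 2 :: (word \<Rightarrow> 'a) set)"
    proof
      fix v :: "word \<Rightarrow> 'a"
      assume "v \<in> Ghat d 2"
      then obtain N x where "DS_h d 2 N x = v"
        using Ghat_2_in_DS_image[OF sqrt] by blast
      then show "v \<in> universal_variety d 2"
        unfolding universal_variety_def using DS_h_in_DS_variety by blast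
    qed
  qed
qed

end
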